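(* Let $X\sim \mathrm{Po}(\lambda)$ with $P(X=k)=e^{-\lambda}\lambda^k/k!$ and $Y\sim\mathrm{Ge}(p)$ with $P(Y=k)=q^kp$, $k\in\mathbb{Z}_+$, where $p\in(0,1]$ and $q=1-p$, and assume $X$ and $Y$ are independent. Then a Stein operator for $X+Y$ is $$\bar{\mathscr{A}}_{X+Y}h(j)=\Big(\lambda+\frac{q}{p}\Big)h(j+1)-j\,h(j)+\sum_{k=0}^{\infty}\sum_{l=1}^{k}q^{k+1}\,\Delta h(j+l),\qquad j\in\mathbb{Z}_+,$$ that is, $\mathbb{E}[\bar{\mathscr{A}}_{X+Y}h(X+Y)]=0$ for all $h\in H_{X+Y}$.
   Context: $\Delta h(j)=h(j+1)-h(j)$ is the forward difference. $H$ denotes the set of bounded functions $h:\mathbb{Z}_+\to\mathbb{R}$, and for a random variable $\bar X$, $H_{\bar X}=\{h\in H: h(0)=0 \text{ and } h(j)=0 \text{ for } j\notin \mathrm{Supp}(\bar X)\}$. A Stein operator for $\bar X$ is an operator $\mathscr{A}_{\bar X}$ with $\mathbb{E}[\mathscr{A}_{\bar X}h(\bar X)]=0$ for the relevant class of $h$. *)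

theory Defs
  imports "HOL-Probability.Probability"
begin

definition fdiff :: "(nat \<Rightarrow> real) \<Rightarrow> nat \<Rightarrow> real" where
  "fdiff h j = h (j + 1) - h j"

definition bounded_fun :: "(nat \<Rightarrow> real) \<Rightarrow> bool" where
  "bounded_fun h \<longleftrightarrow> (\<exists>B. \<forall>j. \<bar>h j\<bar> \<le> B)"

definition H_of :: "nat pmf \<Rightarrow> (nat \<Rightarrow> real) set" where
  "H_of D = {h. bounded_fun h \<and> h 0 = 0 \<and> (\<forall>j. j \<notin> set_pmf D \<longrightarrow> h j = 0)}"

definition law_PoGe :: "real \<Rightarrow> real \<Rightarrow> nat pmf" where
  "law_PoGe lam p = map_pmf (\<lambda>(x, y). x + y) (pair_pmf (poisson_pmf lam) (geometric_pmf p))"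

definition stein_PoGe :: "real \<Rightarrow> real \<Rightarrow> (nat \<Rightarrow> real) \<Rightarrow> nat \<Rightarrow> real" where
  "stein_PoGe lam p h j =
     (lam + (1 - p) / p) * h (j + 1) - real j * h j
     + (\<Sum>k. \<Sum>l = 1..k. (1 - p) ^ (k + 1) * fdiff h (j + l))"

end

theory Submission
  imports Defs
begin

text \<open>Write \<open>q = 1 - p\<close>. Telescoping the inner sum turns the operator into
\<open>\<lambda> h(j+1) - j h(j) + (q/p) E h(j+Y'+1)\<close> with \<open>Y' ~ Ge(p)\<close>, so at \<open>j = X + Y\<close> it splits
into the Poisson Stein operator \<open>\<lambda> f(x+1) - x f(x)\<close> applied to \<open>h(\<cdot> + Y)\<close> at \<open>X\<close> and the
geometric Stein operator \<open>(q/p) E f(y+Y'+1) - y f(y)\<close> applied to \<open>h(X + \<cdot>)\<close> at \<open>Y\<close>.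
Both have mean zero by size biasing: \<open>(k+1) P(X = k+1) = \<lambda> P(X = k)\<close>, and
\<open>(k+1) P(Y = k+1) = (q/p) P(Y + Y' = k)\<close> because \<open>Y + Y'\<close> is negative binomial with
\<open>P(Y + Y' = k) = (k+1) p\<^sup>2 q\<^sup>k\<close>. Fubini over the independent pair \<open>(X, Y)\<close> finishes the proof.\<close>

lemma measure_pmf_pair_pmf:
  fixes A :: "'a::countable pmf" and B :: "'b::countable pmf"
  shows "measure_pmf (pair_pmf A B) = measure_pmf A \<Otimes>\<^sub>M measure_pmf B"
proof (rule pair_measure_eqI[symmetric])
  show "sigma_finite_measure (measure_pmf A)" "sigma_finite_measure (measure_pmf B)"
    by (simp_all add: prob_space_imp_sigma_finite measure_pmf.prob_space_axioms)
  have "sets (measure_pmf A \<Otimes>\<^sub>M measure_pmf B)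
      = sets (count_space (UNIV :: 'a set) \<Otimes>\<^sub>M count_space (UNIV :: 'b set))"
    by (intro sets_pair_measure_cong) auto
  also have "\<dots> = UNIV"
    by (subst pair_measure_countable) auto
  finally show "sets (measure_pmf A \<Otimes>\<^sub>M measure_pmf B) = sets (measure_pmf (pair_pmf A B))"
    by simp
  fix X :: "'a set" and Y :: "'b set"
  show "emeasure A X * emeasure B Y = emeasure (pair_pmf A B) (X \<times> Y)"
    by (simp add: measure_pmf.emeasure_eq_measure measure_pmf_prob_product ennreal_mult)
qed

lemma
  fixes A :: "'a::countable pmf" and B :: "'b::countable pmf" and f :: "'a \<Rightarrow> 'b \<Rightarrow> real"
  assumes "integrable (pair_pmf A B) (\<lambda>(x, y). f x y)"
  shows integrable_expectation_pair_pmf_fst: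
      "integrable A (\<lambda>x. measure_pmf.expectation B (f x))"
    and expectation_pair_pmf_fst:
      "measure_pmf.expectation (pair_pmf A B) (\<lambda>(x, y). f x y)
     = measure_pmf.expectation A (\<lambda>x. measure_pmf.expectation B (f x))"
    and expectation_pair_pmf_snd:
      "measure_pmf.expectation (pair_pmf A B) (\<lambda>(x, y). f x y)
     = measure_pmf.expectation B (\<lambda>y. measure_pmf.expectation A (\<lambda>x. f x y))"
proof -
  interpret pair_sigma_finite A B
    by (intro pair_sigma_finite.intro prob_space_imp_sigma_finite measure_pmf.prob_space_axioms)
  have int: "integrable (A \<Otimes>\<^sub>M B) (\<lambda>(x, y). f x y)"
    using assms by (simp add: measure_pmf_pair_pmf)
  show "integrable A (\<lambda>x. measure_pmf.expectation B (f x))"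
    using integrable_fst[OF int] by simp
  show "measure_pmf.expectation (pair_pmf A B) (\<lambda>(x, y). f x y)
      = measure_pmf.expectation A (\<lambda>x. measure_pmf.expectation B (f x))"
    using integral_fst[OF int] by (simp add: measure_pmf_pair_pmf)
  show "measure_pmf.expectation (pair_pmf A B) (\<lambda>(x, y). f x y)
      = measure_pmf.expectation B (\<lambda>y. measure_pmf.expectation A (\<lambda>x. f x y))"
    using integral_snd[OF int] by (simp add: measure_pmf_pair_pmf)
qed

lemma integrable_pair_pmf_bound:
  fixes A :: "'a pmf" and B :: "'b pmf" and g :: "'a \<times> 'b \<Rightarrow> real"
  assumes "integrable A a" "integrable B b" "\<And>x y. \<bar>g (x, y)\<bar> \<le> a x + b y"
  shows "integrable (pair_pmf A B) g"
proof (rule Bochner_Integration.integrable_bound)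
  have "integrable (map_pmf fst (pair_pmf A B)) a" "integrable (map_pmf snd (pair_pmf A B)) b"
    using assms(1,2) by (simp_all add: map_fst_pair_pmf map_snd_pair_pmf)
  then show "integrable (pair_pmf A B) (\<lambda>z. a (fst z) + b (snd z))"
    by (intro Bochner_Integration.integrable_add) simp_all
  show "AE z in pair_pmf A B. norm (g z) \<le> norm (a (fst z) + b (snd z))"
    using assms(3) by (intro AE_I2) (metis abs_ge_self order_trans prod.collapse real_norm_def)
qed simp

lemma expectation_pair_pmf_add_eq_0:
  fixes A :: "'a::countable pmf" and B :: "'b::countable pmf" and u v :: "'a \<Rightarrow> 'b \<Rightarrow> real"
  assumes "integrable (pair_pmf A B) (\<lambda>(x, y). u x y)" "integrable (pair_pmf A B) (\<lambda>(x, y). v x y)"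
    and "\<And>y. measure_pmf.expectation A (\<lambda>x. u x y) = 0"
    and "\<And>x. measure_pmf.expectation B (v x) = 0"
  shows "measure_pmf.expectation (pair_pmf A B) (\<lambda>(x, y). u x y + v x y) = 0"
proof -
  have "measure_pmf.expectation (pair_pmf A B) (\<lambda>(x, y). u x y + v x y)
      = measure_pmf.expectation (pair_pmf A B) (\<lambda>(x, y). u x y)
      + measure_pmf.expectation (pair_pmf A B) (\<lambda>(x, y). v x y)"
    using Bochner_Integration.integral_add[OF assms(1,2)] by (simp add: case_prod_unfold)
  also have "\<dots> = 0"
    using assms by (simp add: expectation_pair_pmf_snd[OF assms(1)] expectation_pair_pmf_fst[OF assms(2)])
  finally show ?thesis .
qed

lemma abs_expectation_pmf_le:
  fixes f :: "'a \<Rightarrow> real"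
  assumes "\<And>x. \<bar>f x\<bar> \<le> B"
  shows "\<bar>measure_pmf.expectation M f\<bar> \<le> B"
proof -
  have "integrable M (\<lambda>x. \<bar>f x\<bar>)"
    using assms by (intro measure_pmf.integrable_const_bound[where B = B]) auto
  then have "measure_pmf.expectation M (\<lambda>x. \<bar>f x\<bar>) \<le> B"
    using assms by (intro measure_pmf.integral_le_const) auto
  then show ?thesis
    using integral_abs_bound[of M f] by linarith
qed

lemma integrable_pmf_nat_iff:
  fixes M :: "nat pmf" and g :: "nat \<Rightarrow> real"
  shows "integrable M g \<longleftrightarrow> summable (\<lambda>n. \<bar>pmf M n * g n\<bar>)"
  unfolding measure_pmf_eq_density
  by (subst integrable_density) (auto simp: integrable_count_space_nat_iff)

lemma sums_expectation_pmf_nat: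
  fixes M :: "nat pmf" and g :: "nat \<Rightarrow> real"
  assumes "integrable M g"
  shows "(\<lambda>n. pmf M n * g n) sums measure_pmf.expectation M g"
proof -
  have "integrable (count_space UNIV) (\<lambda>n. pmf M n * g n)"
    using assms unfolding measure_pmf_eq_density by (subst (asm) integrable_density) auto
  from sums_integral_count_space_nat[OF this] show ?thesis
    unfolding measure_pmf_eq_density by (subst integral_density) auto
qed

lemma
  fixes Q D :: "nat pmf" and f :: "nat \<Rightarrow> real"
  assumes size_bias: "\<And>n. real (Suc n) * pmf Q (Suc n) = c * pmf D n"
    and int: "integrable D (\<lambda>n. f (Suc n))"
  shows integrable_size_bias: "integrable Q (\<lambda>n. real n * f n)"
    and expectation_size_bias:
      "measure_pmf.expectation Q (\<lambda>n. real n * f n) = c * measure_pmf.expectation D (\<lambda>n. f (Suc n))"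
proof -
  have shift: "pmf Q (Suc n) * (real (Suc n) * f (Suc n)) = c * (pmf D n * f (Suc n))" for n
    using size_bias[of n] by (metis mult.assoc mult.commute)
  have "summable (\<lambda>n. \<bar>c\<bar> * \<bar>pmf D n * f (Suc n)\<bar>)"
    using int by (intro summable_mult) (simp add: integrable_pmf_nat_iff)
  then have "summable (\<lambda>n. \<bar>pmf Q (Suc n) * (real (Suc n) * f (Suc n))\<bar>)"
    by (simp only: shift abs_mult)
  then have "summable (\<lambda>n. \<bar>pmf Q n * (real n * f n)\<bar>)"
    by (subst summable_Suc_iff[symmetric])
  then show int_Q: "integrable Q (\<lambda>n. real n * f n)"
    by (simp add: integrable_pmf_nat_iff)
  have "(\<lambda>n. pmf Q (Suc n) * (real (Suc n) * f (Suc n)))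
          sums (c * measure_pmf.expectation D (\<lambda>n. f (Suc n)))"
    unfolding shift by (intro sums_mult sums_expectation_pmf_nat int)
  then have "(\<lambda>n. pmf Q n * (real n * f n)) sums (c * measure_pmf.expectation D (\<lambda>n. f (Suc n)))"
    by (subst (asm) sums_Suc_iff) simp
  with sums_expectation_pmf_nat[OF int_Q] show
    "measure_pmf.expectation Q (\<lambda>n. real n * f n) = c * measure_pmf.expectation D (\<lambda>n. f (Suc n))"
    by (rule sums_unique2)
qed

lemma poisson_pmf_size_bias:
  assumes "0 < lam"
  shows "real (Suc n) * pmf (poisson_pmf lam) (Suc n) = lam * pmf (poisson_pmf lam) n"
  using assms by (simp add: fact_Suc del: of_nat_Suc)

lemma integrable_real_poisson_pmf:
  assumes "0 < lam"
  shows "integrable (poisson_pmf lam) real"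
  using integrable_size_bias[OF poisson_pmf_size_bias[OF assms], of "\<lambda>_. 1"] by simp

lemma neg_binomial_pmf_2:
  "neg_binomial_pmf 2 p = map_pmf (\<lambda>(x, y). x + y) (pair_pmf (geometric_pmf p) (geometric_pmf p))"
  unfolding numeral_2_eq_2 neg_binomial_pmf_Suc[of "Suc 0"] by simp

lemma geometric_pmf_size_bias:
  assumes "0 < p" "p \<le> 1"
  shows "real (Suc n) * pmf (geometric_pmf p) (Suc n) = (1 - p) / p * pmf (neg_binomial_pmf 2 p) n"
  using assms by (simp add: pmf_neg_binomial power2_eq_square)

definition poisson_stein_op :: "real \<Rightarrow> (nat \<Rightarrow> real) \<Rightarrow> nat \<Rightarrow> real" where
  "poisson_stein_op lam f j = lam * f (Suc j) - real j * f j"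

definition geometric_stein_op :: "real \<Rightarrow> (nat \<Rightarrow> real) \<Rightarrow> nat \<Rightarrow> real" where
  "geometric_stein_op p f j =
     (1 - p) / p * measure_pmf.expectation (geometric_pmf p) (\<lambda>m. f (j + m + 1)) - real j * f j"

lemma abs_poisson_stein_op_le:
  assumes "0 \<le> lam" "\<And>n. \<bar>f n\<bar> \<le> B"
  shows "\<bar>poisson_stein_op lam f j\<bar> \<le> lam * B + real j * B"
proof -
  have "\<bar>lam * f (Suc j)\<bar> \<le> lam * B" "\<bar>real j * f j\<bar> \<le> real j * B"
    using assms by (simp_all add: abs_mult mult_left_mono)
  then show ?thesis
    unfolding poisson_stein_op_def by linarith
qed

lemma abs_geometric_stein_op_le:
  assumes "0 < p" "p \<le> 1" "\<And>n. \<bar>f n\<bar> \<le> B"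
  shows "\<bar>geometric_stein_op p f j\<bar> \<le> (1 - p) / p * B + real j * B"
proof -
  let ?E = "measure_pmf.expectation (geometric_pmf p) (\<lambda>m. f (j + m + 1))"
  have "\<bar>?E\<bar> \<le> B"
    using assms(3) by (rule abs_expectation_pmf_le)
  moreover have "0 \<le> (1 - p) / p"
    using assms(1,2) by simp
  ultimately have "\<bar>(1 - p) / p * ?E\<bar> \<le> (1 - p) / p * B"
    by (metis abs_mult abs_of_nonneg mult_left_mono)
  moreover have "\<bar>real j * f j\<bar> \<le> real j * B"
    using assms(3) by (simp add: abs_mult mult_left_mono)
  ultimately show ?thesis
    unfolding geometric_stein_op_def by linarith
qed

lemma poisson_stein_op_mean_zero:
  assumes "0 < lam" and int: "integrable (poisson_pmf lam) (\<lambda>n. f (Suc n))"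
  shows "integrable (poisson_pmf lam) (poisson_stein_op lam f)
       \<and> measure_pmf.expectation (poisson_pmf lam) (poisson_stein_op lam f) = 0"
proof -
  note size_bias = poisson_pmf_size_bias[OF assms(1)]
  have int_Xf: "integrable (poisson_pmf lam) (\<lambda>n. real n * f n)"
    by (rule integrable_size_bias[OF size_bias int])
  then show ?thesis
    unfolding poisson_stein_op_def using expectation_size_bias[OF size_bias int] int by simp
qed

lemma geometric_stein_op_mean_zero:
  assumes p: "0 < p" "p \<le> 1" and bound: "\<And>n. \<bar>f n\<bar> \<le> B"
  shows "integrable (geometric_pmf p) (geometric_stein_op p f)
       \<and> measure_pmf.expectation (geometric_pmf p) (geometric_stein_op p f) = 0"
proof -
  let ?G = "geometric_pmf p" and ?NB = "neg_binomial_pmf 2 p"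
  define g where "g y = measure_pmf.expectation ?G (\<lambda>m. f (y + m + 1))" for y
  have int_pair: "integrable (pair_pmf ?G ?G) (\<lambda>(y, m). f (y + m + 1))"
    using bound by (intro measure_pmf.integrable_const_bound[where B = B]) auto
  have int_NB: "integrable ?NB (\<lambda>k. f (Suc k))"
    using bound by (intro measure_pmf.integrable_const_bound[where B = B]) auto
  have int_g: "integrable ?G g"
    unfolding g_def by (rule integrable_expectation_pair_pmf_fst[OF int_pair])
  have "measure_pmf.expectation ?NB (\<lambda>k. f (Suc k))
      = measure_pmf.expectation (pair_pmf ?G ?G) (\<lambda>(y, m). f (y + m + 1))"
    by (simp add: neg_binomial_pmf_2 case_prod_unfold)
  also have "\<dots> = measure_pmf.expectation ?G g"
    unfolding g_def by (rule expectation_pair_pmf_fst[OF int_pair])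
  finally have NB_eq: "measure_pmf.expectation ?NB (\<lambda>k. f (Suc k)) = measure_pmf.expectation ?G g" .
  note size_bias = geometric_pmf_size_bias[OF p]
  have int_Yf: "integrable ?G (\<lambda>n. real n * f n)"
    by (rule integrable_size_bias[OF size_bias int_NB])
  have op_eq: "geometric_stein_op p f = (\<lambda>y. (1 - p) / p * g y - real y * f y)"
    by (simp add: fun_eq_iff geometric_stein_op_def g_def)
  show ?thesis
    unfolding op_eq using expectation_size_bias[OF size_bias int_NB] NB_eq int_g int_Yf by simp
qed

lemma fdiff_telescope: "(\<Sum>l = 1..k. fdiff h (j + l)) = h (j + k + 1) - h (j + 1)"
  by (induction k) (auto simp: fdiff_def sum.cl_ivl_Suc)

lemma stein_PoGe_eq:
  assumes p: "0 < p" "p \<le> 1" and bound: "\<And>n. \<bar>h n\<bar> \<le> B"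
  shows "stein_PoGe lam p h j = lam * h (Suc j) - real j * h j
           + (1 - p) / p * measure_pmf.expectation (geometric_pmf p) (\<lambda>m. h (j + m + 1))"
proof -
  let ?q = "1 - p" and ?E = "measure_pmf.expectation (geometric_pmf p) (\<lambda>m. h (j + m + 1))"
  have "integrable (geometric_pmf p) (\<lambda>m. h (j + m + 1))"
    using bound by (intro measure_pmf.integrable_const_bound[where B = B]) auto
  then have "(\<lambda>k. ?q / p * (pmf (geometric_pmf p) k * h (j + k + 1))) sums (?q / p * ?E)"
    by (intro sums_mult sums_expectation_pmf_nat)
  moreover have "?q / p * (pmf (geometric_pmf p) k * h (j + k + 1)) = ?q ^ (k + 1) * h (j + k + 1)"
    for k using p by simp
  ultimately have tail: "(\<lambda>k. ?q ^ (k + 1) * h (j + k + 1)) sums (?q / p * ?E)"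
    by simp
  have "(\<lambda>k. ?q * h (j + 1) * ?q ^ k) sums (?q * h (j + 1) * (1 / (1 - ?q)))"
    using p by (intro sums_mult geometric_sums) auto
  then have const: "(\<lambda>k. ?q ^ (k + 1) * h (j + 1)) sums (?q / p * h (j + 1))"
    by (simp add: field_simps)
  have "(\<Sum>l = 1..k. ?q ^ (k + 1) * fdiff h (j + l))
      = ?q ^ (k + 1) * h (j + k + 1) - ?q ^ (k + 1) * h (j + 1)" for k
    by (simp only: sum_distrib_left[symmetric] fdiff_telescope right_diff_distrib)
  with sums_diff[OF tail const]
  have "(\<lambda>k. \<Sum>l = 1..k. ?q ^ (k + 1) * fdiff h (j + l)) sums (?q / p * ?E - ?q / p * h (j + 1))"
    by simp
  then show ?thesis
    unfolding stein_PoGe_def by (simp add: sums_iff algebra_simps)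
qed

lemma stein_PoGe_split:
  assumes "0 < p" "p \<le> 1" "\<And>n. \<bar>h n\<bar> \<le> B"
  shows "stein_PoGe lam p h (x + y)
       = poisson_stein_op lam (\<lambda>i. h (i + y)) x + geometric_stein_op p (\<lambda>j. h (x + j)) y"
  unfolding stein_PoGe_eq[OF assms] poisson_stein_op_def geometric_stein_op_def
  by (simp add: algebra_simps)

lemma
  assumes lam: "0 < lam" and p: "0 < p" "p \<le> 1" and bound: "\<And>n. \<bar>h n\<bar> \<le> B"
  shows integrable_pair_pmf_poisson_stein_op:
      "integrable (pair_pmf (poisson_pmf lam) (geometric_pmf p))
         (\<lambda>(x, y). poisson_stein_op lam (\<lambda>i. h (i + y)) x)"
    and integrable_pair_pmf_geometric_stein_op:
      "integrable (pair_pmf (poisson_pmf lam) (geometric_pmf p))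
         (\<lambda>(x, y). geometric_stein_op p (\<lambda>j. h (x + j)) y)"
proof -
  show "integrable (pair_pmf (poisson_pmf lam) (geometric_pmf p))
      (\<lambda>(x, y). poisson_stein_op lam (\<lambda>i. h (i + y)) x)"
  proof (rule integrable_pair_pmf_bound[where b = "\<lambda>_. 0"])
    show "integrable (poisson_pmf lam) (\<lambda>x. lam * B + real x * B)"
      using integrable_real_poisson_pmf[OF lam] by auto
    show "\<bar>case (x, y) of (x, y) \<Rightarrow> poisson_stein_op lam (\<lambda>i. h (i + y)) x\<bar>
        \<le> lam * B + real x * B + 0" for x y
      using lam bound by (auto intro: abs_poisson_stein_op_le)
  qed simp
  show "integrable (pair_pmf (poisson_pmf lam) (geometric_pmf p))
      (\<lambda>(x, y). geometric_stein_op p (\<lambda>j. h (x + j)) y)"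
  proof (rule integrable_pair_pmf_bound[where a = "\<lambda>_. 0"])
    show "integrable (geometric_pmf p) (\<lambda>y. (1 - p) / p * B + real y * B)"
      using p integrable_real_geometric_pmf[of p] by auto
    show "\<bar>case (x, y) of (x, y) \<Rightarrow> geometric_stein_op p (\<lambda>j. h (x + j)) y\<bar>
        \<le> 0 + ((1 - p) / p * B + real y * B)" for x y
      unfolding prod.case add_0_left by (rule abs_geometric_stein_op_le[OF p bound])
  qed simp
qed

theorem proposition3p2:
  fixes lam p :: real and h :: "nat \<Rightarrow> real"
  assumes "0 < lam" and "0 < p" and "p \<le> 1"
    and "h \<in> H_of (law_PoGe lam p)"
  shows "integrable (measure_pmf (law_PoGe lam p)) (stein_PoGe lam p h)
       \<and> measure_pmf.expectation (law_PoGe lam p) (stein_PoGe lam p h) = 0"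
proof -
  obtain B where bound: "\<And>n. \<bar>h n\<bar> \<le> B"
    using assms(4) by (auto simp: H_of_def bounded_fun_def)
  note int_X = integrable_pair_pmf_poisson_stein_op[where h = h, OF assms(1-3) bound]
    and int_Y = integrable_pair_pmf_geometric_stein_op[where h = h, OF assms(1-3) bound]
  have "measure_pmf.expectation (pair_pmf (poisson_pmf lam) (geometric_pmf p))
      (\<lambda>(x, y). poisson_stein_op lam (\<lambda>i. h (i + y)) x + geometric_stein_op p (\<lambda>j. h (x + j)) y) = 0"
  proof (rule expectation_pair_pmf_add_eq_0[OF int_X int_Y])
    show "measure_pmf.expectation (poisson_pmf lam) (\<lambda>x. poisson_stein_op lam (\<lambda>i. h (i + y)) x) = 0"
      for y using assms(1) bound
      by (intro poisson_stein_op_mean_zero[THEN conjunct2] measure_pmf.integrable_const_bound[where B = B])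
         auto
    show "measure_pmf.expectation (geometric_pmf p) (geometric_stein_op p (\<lambda>j. h (x + j))) = 0"
      for x using assms(2,3) bound by (intro geometric_stein_op_mean_zero[THEN conjunct2]) auto
  qed
  then show ?thesis
    using Bochner_Integration.integrable_add[OF int_X int_Y]
    by (simp add: law_PoGe_def stein_PoGe_split[where h = h, OF assms(2,3) bound] case_prod_unfold)
qed

end
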